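(* For each librational traveling wave $f$ there exists a real number $\alpha_*>0$ with $\alpha_*\in\sigma(\mathrm{Q})$; and if in addition $c\neq0$, then $G_p(\alpha_* )>0$ for every such $\alpha_*$.
   Context: A traveling wave of speed $c$ ($c^2\neq1$) is a real solution $f$ of $(c^2-1)f''+\sin f=0$, with energy $E$ given by $\tfrac12(c^2-1)(f')^2+1-\cos f=E$; it is librational if $0<E<2$, and then periodic with fundamental period $T$ (smallest $T>0$ with $f(z+T)=f(z)\pmod{2\pi}$). Let $\gamma=1/(c^2-1)$. $\sigma(\mathrm{Q})$ is the set of $\lambda\in\mathbb{C}$ for which $q''+\gamma\cos(f(z))q=\gamma^2\lambda^2q$ has a nontrivial solution bounded on $\mathbb{R}$. Equation (P): $p''-2c\gamma\lambda p'+\gamma(\lambda^2+\cos f(z))p=0$, written as a first-order system for $(p,p')$ with fundamental matrix $F(z;\lambda)$, $F(0;\lambda)=I$; its Floquet multipliers $\rho_\pm(\lambda)$ are the eigenvalues of $F(T;\lambda)$. Define $G_p(\lambda)=\log|\rho_+(\lambda)|\log|\rho_-(\lambda)|$. *)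

theory Defs
  imports "HOL-Analysis.Analysis"
begin

definition gam :: "real \<Rightarrow> real" where
  "gam c = 1 / (c^2 - 1)"

definition traveling_wave :: "real \<Rightarrow> (real \<Rightarrow> real) \<Rightarrow> (real \<Rightarrow> real) \<Rightarrow> bool" where
  "traveling_wave c f f' \<longleftrightarrow> c^2 \<noteq> 1 \<and>
     (\<exists>f''. \<forall>z. (f has_real_derivative f' z) (at z) \<and> (f' has_real_derivative f'' z) (at z)
              \<and> (c^2 - 1) * f'' z + sin (f z) = 0)"

definition energy :: "real \<Rightarrow> (real \<Rightarrow> real) \<Rightarrow> (real \<Rightarrow> real) \<Rightarrow> real \<Rightarrow> bool" where
  "energy c f f' E \<longleftrightarrow> (\<forall>z. (1/2) * (c^2 - 1) * (f' z)^2 + 1 - cos (f z) = E)"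

definition period_mod_2pi :: "(real \<Rightarrow> real) \<Rightarrow> real \<Rightarrow> bool" where
  "period_mod_2pi f T \<longleftrightarrow> (\<exists>k::int. \<forall>z. f (z + T) = f z + 2 * pi * of_int k)"

definition fundamental_period :: "(real \<Rightarrow> real) \<Rightarrow> real \<Rightarrow> bool" where
  "fundamental_period f T \<longleftrightarrow> T > 0 \<and> period_mod_2pi f T \<and>
     (\<forall>S. 0 < S \<and> period_mod_2pi f S \<longrightarrow> T \<le> S)"

definition sigmaQ :: "real \<Rightarrow> (real \<Rightarrow> real) \<Rightarrow> complex set" where
  "sigmaQ c f = {lam. \<exists>q q' :: real \<Rightarrow> complex.
      (\<forall>z. (q has_vector_derivative q' z) (at z) \<and>
           (q' has_vector_derivative
              (of_real ((gam c)^2) * lam^2 * q z - of_real (gam c * cos (f z)) * q z)) (at z))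
      \<and> bounded (range q) \<and> (\<exists>z. q z \<noteq> 0)}"

text \<open>Solutions (p, p') of the first-order system associated with equation (P):
  p'' - 2 c gamma lambda p' + gamma (lambda^2 + cos f) p = 0.\<close>
definition P_sol :: "real \<Rightarrow> (real \<Rightarrow> real) \<Rightarrow> complex \<Rightarrow> (real \<Rightarrow> complex) \<times> (real \<Rightarrow> complex) \<Rightarrow> bool" where
  "P_sol c f lam pq \<longleftrightarrow> (\<forall>z. (fst pq has_vector_derivative snd pq z) (at z) \<and>
      (snd pq has_vector_derivative
         (of_real (2 * c * gam c) * lam * snd pq z
          - of_real (gam c) * (lam^2 + of_real (cos (f z))) * fst pq z)) (at z))"

text \<open>Columns of the fundamental matrix F(z; lambda), F(0; lambda) = I.\<close>
definition fund1 :: "real \<Rightarrow> (real \<Rightarrow> real) \<Rightarrow> complex \<Rightarrow> (real \<Rightarrow> complex) \<times> (real \<Rightarrow> complex)" where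
  "fund1 c f lam = (THE pq. P_sol c f lam pq \<and> fst pq 0 = 1 \<and> snd pq 0 = 0)"

definition fund2 :: "real \<Rightarrow> (real \<Rightarrow> real) \<Rightarrow> complex \<Rightarrow> (real \<Rightarrow> complex) \<times> (real \<Rightarrow> complex)" where
  "fund2 c f lam = (THE pq. P_sol c f lam pq \<and> fst pq 0 = 0 \<and> snd pq 0 = 1)"

text \<open>Monodromy matrix F(T; lambda) = [[a, b], [d, e]] as entries.\<close>
definition monodromy :: "real \<Rightarrow> (real \<Rightarrow> real) \<Rightarrow> real \<Rightarrow> complex \<Rightarrow> complex \<times> complex \<times> complex \<times> complex" where
  "monodromy c f T lam = (fst (fund1 c f lam) T, fst (fund2 c f lam) T,
                        snd (fund1 c f lam) T, snd (fund2 c f lam) T)"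

text \<open>Floquet multipliers: the two eigenvalues (with multiplicity) of the 2x2 matrix F(T; lambda),
  i.e. the roots of rho^2 - tr rho + det.\<close>
definition floquet_plus :: "real \<Rightarrow> (real \<Rightarrow> real) \<Rightarrow> real \<Rightarrow> complex \<Rightarrow> complex" where
  "floquet_plus c f T lam = (case monodromy c f T lam of (a, b, d, e) \<Rightarrow>
      ((a + e) + csqrt ((a + e)^2 - 4 * (a * e - b * d))) / 2)"

definition floquet_minus :: "real \<Rightarrow> (real \<Rightarrow> real) \<Rightarrow> real \<Rightarrow> complex \<Rightarrow> complex" where
  "floquet_minus c f T lam = (case monodromy c f T lam of (a, b, d, e) \<Rightarrow>
      ((a + e) - csqrt ((a + e)^2 - 4 * (a * e - b * d))) / 2)"

definition G_p :: "real \<Rightarrow> (real \<Rightarrow> real) \<Rightarrow> real \<Rightarrow> complex \<Rightarrow> real" where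
  "G_p c f T lam = ln (cmod (floquet_plus c f T lam)) * ln (cmod (floquet_minus c f T lam))"

end

theory Submission
  imports Defs
begin

text \<open>For \<open>c\<^sup>2 > 1\<close> the half-angle \<open>cos (f/2)\<close>, and for \<open>c\<^sup>2 < 1\<close> the half-angle \<open>sin (f/2)\<close>,
  is a bounded solution of the Q-equation for an explicit \<open>\<alpha> > 0\<close>; this is a direct computation
  with the pendulum equation and the energy.

  Conversely, if \<open>q\<close> is a bounded nonzero solution for \<open>\<alpha>\<close>, then \<open>p = exp (\<mu> z) q\<close> with
  \<open>\<mu> = c \<gamma> \<alpha>\<close> solves (P).  By Abel's identity the monodromy matrix has determinant
  \<open>exp (2 \<mu> T)\<close>, so the rescaled multipliers \<open>\<rho>\<^sub>\<plusminus> / exp (\<mu> T)\<close> have product 1, and by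
  Cayley--Hamilton \<open>q\<close> satisfies the corresponding three-term recurrence in steps of \<open>T\<close>.  A
  bounded nonzero solution of that recurrence forces both rescaled multipliers onto the unit
  circle, so \<open>\<bar>\<rho>\<^sub>\<plusminus>\<bar> = exp (\<mu> T)\<close> and \<open>G\<^sub>p(\<alpha>) = (\<mu> T)\<^sup>2 > 0\<close> when \<open>c \<noteq> 0\<close>.

  The fundamental matrix is well defined because (P) is a linear system with bounded
  coefficients, which has unique global solutions.\<close>

section \<open>Linear differential equations on the real line\<close>

definition integral_from_0 :: "(real \<Rightarrow> 'a::banach) \<Rightarrow> real \<Rightarrow> 'a" where
  "integral_from_0 g t = integral {0..t} g - integral {t..0} g"

lemma integral_from_0_0 [simp]: "integral_from_0 g 0 = 0"
  by (simp add: integral_from_0_def)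

lemma integral_from_0_eq_integral_from:
  fixes g :: "real \<Rightarrow> 'a::banach"
  assumes g: "continuous_on UNIV g" and "\<bar>t\<bar> \<le> R"
  shows "integral_from_0 g t = integral {-R..t} g - integral {-R..0} g"
proof -
  have int: "g integrable_on {a..b}" for a b
    using integrable_continuous_interval continuous_on_subset[OF g] by blast
  show ?thesis
  proof (cases "0 \<le> t")
    case True
    then have "integral {-R..0} g + integral {0..t} g = integral {-R..t} g"
      using assms by (intro Henstock_Kurzweil_Integration.integral_combine int) auto
    moreover have "integral {t..0} g = 0"
      using True by (cases "t = 0") auto
    ultimately show ?thesis
      unfolding integral_from_0_def by (simp add: algebra_simps)
  next
    case False
    then have "integral {-R..t} g + integral {t..0} g = integral {-R..0} g"
      using assms by (intro Henstock_Kurzweil_Integration.integral_combine int) auto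
    then show ?thesis
      using False unfolding integral_from_0_def by (simp add: algebra_simps)
  qed
qed

lemma integral_from_0_has_vector_derivative:
  fixes g :: "real \<Rightarrow> 'a::banach"
  assumes g: "continuous_on UNIV g"
  shows "(integral_from_0 g has_vector_derivative g t) (at t)"
proof -
  define R where "R = \<bar>t\<bar> + 1"
  have "((\<lambda>u. integral {-R..u} g) has_vector_derivative g t) (at t within {-R..R})"
    by (rule integral_has_vector_derivative) (auto intro: continuous_on_subset[OF g] simp: R_def)
  then have D: "((\<lambda>u. integral {-R..u} g - integral {-R..0} g) has_vector_derivative g t) (at t)"
    by (subst (asm) at_within_interior) (auto intro!: derivative_eq_intros simp: R_def)
  have eq: "integral {-R..y} g - integral {-R..0} g = integral_from_0 g y" if "y \<in> ball t 1" for y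
  proof (rule integral_from_0_eq_integral_from[OF g, symmetric])
    show "\<bar>y\<bar> \<le> R" using that unfolding R_def mem_ball dist_real_def by arith
  qed
  show ?thesis
    by (rule has_vector_derivative_transform_within_open[OF D, of "ball t 1"]) (simp_all add: eq)
qed

lemma continuous_on_integral_from_0:
  fixes g :: "real \<Rightarrow> 'a::banach"
  assumes "continuous_on UNIV g"
  shows "continuous_on UNIV (integral_from_0 g)"
  using integral_from_0_has_vector_derivative[OF assms]
  by (intro continuous_on_vector_derivative) (auto intro: has_vector_derivative_at_within)

lemma integral_from_0_diff:
  fixes g h :: "real \<Rightarrow> 'a::banach"
  assumes "continuous_on UNIV g" and "continuous_on UNIV h"
  shows "integral_from_0 (\<lambda>s. g s - h s) t = integral_from_0 g t - integral_from_0 h t"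
proof -
  have "f integrable_on {a..b}" if "continuous_on UNIV f" for a b and f :: "real \<Rightarrow> 'a"
    using integrable_continuous_interval continuous_on_subset[OF that] by blast
  then show ?thesis
    using assms by (simp add: integral_from_0_def integral_diff)
qed

lemma has_integral_exp_mult:
  fixes K t :: real
  assumes "K \<noteq> 0" and "0 \<le> t"
  shows "((\<lambda>s. exp (K * s)) has_integral (exp (K * t) - 1) / K) {0..t}"
proof -
  have "((\<lambda>s. exp (K * s) / K) has_vector_derivative exp (K * s)) (at s within {0..t})" for s
    using assms by (auto intro!: derivative_eq_intros
        simp: has_real_derivative_iff_has_vector_derivative[symmetric])
  from fundamental_theorem_of_calculus[OF assms(2) this] show ?thesis
    by (simp add: diff_divide_distrib)
qed

lemma integral_from_0_eq_sgn_scaleR: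
  "integral_from_0 g t = sgn t *\<^sub>R integral {0..\<bar>t\<bar>} (\<lambda>s. g (sgn t * s))"
proof (cases "0 \<le> t")
  case True
  then show ?thesis
    by (cases "t = 0") (auto simp: integral_from_0_def)
next
  case False
  then have "integral {t..0} g = integral {0..\<bar>t\<bar>} (\<lambda>s. g (- s))"
    using Henstock_Kurzweil_Integration.integral_reflect_real[of "\<bar>t\<bar>" 0 "\<lambda>s. g (- s)"] by simp
  then show ?thesis
    using False by (simp add: integral_from_0_def)
qed

text \<open>An integrand of exponential growth rate \<open>K\<close> has an antiderivative of the same growth,
  gaining the factor \<open>1/K\<close>: this is what makes the Picard map contract in the weighted norm.\<close>
lemma norm_integral_from_0_exp_bound:
  fixes g :: "real \<Rightarrow> 'a::banach"
  assumes g: "continuous_on UNIV g" and K: "K > 0"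
    and bound: "\<And>s. norm (g s) \<le> C * exp (K * \<bar>s\<bar>)"
  shows "norm (integral_from_0 g t) \<le> C * exp (K * \<bar>t\<bar>) / K"
proof -
  define h where "h s = g (sgn t * s)" for s
  have "C \<ge> 0" using order_trans[OF norm_ge_zero bound[of 0]] by simp
  have int: "h integrable_on {0..\<bar>t\<bar>}"
    unfolding h_def by (intro integrable_continuous_interval continuous_intros
        continuous_on_compose2[OF g]) auto
  have h_bound: "norm (h s) \<le> C * exp (K * s)" if "s \<in> {0..\<bar>t\<bar>}" for s
  proof -
    have "\<bar>sgn t * s\<bar> \<le> s" using that by (simp add: abs_mult sgn_real_def)
    then show ?thesis
      using bound[of "sgn t * s"] \<open>C \<ge> 0\<close> K unfolding h_def
      by (meson exp_le_cancel_iff mult_left_mono mult_le_cancel_left_pos order_trans)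
  qed
  have "norm (integral_from_0 g t) = \<bar>sgn t\<bar> * norm (integral {0..\<bar>t\<bar>} h)"
    by (simp add: integral_from_0_eq_sgn_scaleR h_def[abs_def])
  also have "\<dots> \<le> norm (integral {0..\<bar>t\<bar>} h)"
    by (cases "t = 0") auto
  also have "\<dots> \<le> integral {0..\<bar>t\<bar>} (\<lambda>s. C * exp (K * s))"
    using has_integral_mult_right[OF has_integral_exp_mult[of K "\<bar>t\<bar>"], of C] K h_bound
    by (intro integral_norm_bound_integral[OF int]) auto
  also have "\<dots> = C * ((exp (K * \<bar>t\<bar>) - 1) / K)"
    using integral_unique[OF has_integral_exp_mult[of K "\<bar>t\<bar>"]] K by simp
  also have "\<dots> \<le> C * exp (K * \<bar>t\<bar>) / K"
    using \<open>C \<ge> 0\<close> K by (simp add: divide_simps algebra_simps)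
  finally show ?thesis .
qed

definition weighted_picard ::
    "(real \<Rightarrow> 'a \<Rightarrow> 'a) \<Rightarrow> real \<Rightarrow> 'a \<Rightarrow> (real \<Rightarrow> 'a) \<Rightarrow> real \<Rightarrow> 'a::banach" where
  "weighted_picard F K x0 y t =
     exp (- K * \<bar>t\<bar>) *\<^sub>R (x0 + integral_from_0 (\<lambda>s. F s (exp (K * \<bar>s\<bar>) *\<^sub>R y s)) t)"

lemma norm_integral_from_0_weighted_le:
  fixes F :: "real \<Rightarrow> 'a::banach \<Rightarrow> 'a"
  assumes bound: "\<And>t x. norm (F t x) \<le> L * norm x" and "0 \<le> L"
    and cont: "\<And>y. continuous_on UNIV y \<Longrightarrow> continuous_on UNIV (\<lambda>t. F t (y t))"
    and "K > 0" and y: "continuous_on UNIV y" "\<And>s. norm (y s) \<le> D"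
  shows "norm (integral_from_0 (\<lambda>s. F s (exp (K * \<bar>s\<bar>) *\<^sub>R y s)) t)
           \<le> L * D * exp (K * \<bar>t\<bar>) / K"
proof (rule norm_integral_from_0_exp_bound)
  show "continuous_on UNIV (\<lambda>s. F s (exp (K * \<bar>s\<bar>) *\<^sub>R y s))"
    by (intro cont continuous_intros y)
  fix s
  have "norm (F s (exp (K * \<bar>s\<bar>) *\<^sub>R y s)) \<le> L * (exp (K * \<bar>s\<bar>) * norm (y s))"
    using bound[of s "exp (K * \<bar>s\<bar>) *\<^sub>R y s"] by simp
  also have "\<dots> \<le> L * (exp (K * \<bar>s\<bar>) * D)"
    using y(2) \<open>0 \<le> L\<close> by (intro mult_left_mono) auto
  finally show "norm (F s (exp (K * \<bar>s\<bar>) *\<^sub>R y s)) \<le> L * D * exp (K * \<bar>s\<bar>)"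
    by (simp add: mult_ac)
qed (use \<open>K > 0\<close> in auto)

lemma weighted_picard_bcontfun:
  fixes F :: "real \<Rightarrow> 'a::banach \<Rightarrow> 'a"
  assumes bound: "\<And>t x. norm (F t x) \<le> L * norm x" and "0 \<le> L"
    and cont: "\<And>y. continuous_on UNIV y \<Longrightarrow> continuous_on UNIV (\<lambda>t. F t (y t))"
    and "K > 0" and "y \<in> bcontfun"
  shows "weighted_picard F K x0 y \<in> bcontfun"
proof -
  have y: "continuous_on UNIV y" using \<open>y \<in> bcontfun\<close> by (simp add: bcontfun_def)
  obtain D where D: "\<And>s. norm (y s) \<le> D"
    using \<open>y \<in> bcontfun\<close> by (auto simp: bcontfun_def bounded_iff)
  have "continuous_on UNIV (weighted_picard F K x0 y)"
    unfolding weighted_picard_def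
    by (intro continuous_intros continuous_on_integral_from_0 cont y)
  moreover have "norm (weighted_picard F K x0 y t) \<le> norm x0 + L * D / K" for t
  proof -
    let ?w = "exp (- K * \<bar>t\<bar>)"
    have "?w \<le> 1" using \<open>K > 0\<close> by simp
    have "norm (weighted_picard F K x0 y t)
        \<le> ?w * (norm x0 + L * D * exp (K * \<bar>t\<bar>) / K)"
      unfolding weighted_picard_def
      using norm_integral_from_0_weighted_le[OF bound \<open>0 \<le> L\<close> cont \<open>K > 0\<close> y D, of t]
      by (auto intro!: mult_left_mono order_trans[OF norm_triangle_ineq])
    also have "\<dots> = ?w * norm x0 + L * D / K"
      by (simp add: algebra_simps flip: exp_add)
    also have "\<dots> \<le> norm x0 + L * D / K"
      using \<open>?w \<le> 1\<close> mult_right_mono[OF \<open>?w \<le> 1\<close> norm_ge_zero[of x0]] by simp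
    finally show ?thesis .
  qed
  ultimately show ?thesis
    by (auto simp: bcontfun_def bounded_iff)
qed

lemma weighted_picard_contraction:
  fixes F :: "real \<Rightarrow> 'a::banach \<Rightarrow> 'a"
  assumes lin: "\<And>t. linear (F t)"
    and bound: "\<And>t x. norm (F t x) \<le> L * norm x" and "0 \<le> L"
    and cont: "\<And>y. continuous_on UNIV y \<Longrightarrow> continuous_on UNIV (\<lambda>t. F t (y t))"
    and "K > 0" and y: "continuous_on UNIV y" and z: "continuous_on UNIV z"
    and D: "\<And>s. norm (y s - z s) \<le> D"
  shows "norm (weighted_picard F K x0 y t - weighted_picard F K x0 z t) \<le> L * D / K"
proof -
  let ?I = "\<lambda>y. integral_from_0 (\<lambda>s. F s (exp (K * \<bar>s\<bar>) *\<^sub>R y s)) t"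
  have "?I y - ?I z = ?I (\<lambda>s. y s - z s)"
    using integral_from_0_diff[of "\<lambda>s. F s (exp (K * \<bar>s\<bar>) *\<^sub>R y s)"
        "\<lambda>s. F s (exp (K * \<bar>s\<bar>) *\<^sub>R z s)"]
    by (simp add: cont continuous_intros y z linear_diff[OF lin] scaleR_diff_right)
  then have "norm (weighted_picard F K x0 y t - weighted_picard F K x0 z t)
      = exp (- K * \<bar>t\<bar>) * norm (?I (\<lambda>s. y s - z s))"
    by (simp add: weighted_picard_def flip: scaleR_diff_right)
  also have "\<dots> \<le> exp (- K * \<bar>t\<bar>) * (L * D * exp (K * \<bar>t\<bar>) / K)"
    by (intro mult_left_mono norm_integral_from_0_weighted_le[OF bound \<open>0 \<le> L\<close> cont \<open>K > 0\<close>]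
        continuous_intros y z D) auto
  also have "\<dots> = L * D / K"
    by (simp add: field_simps flip: exp_add)
  finally show ?thesis .
qed

lemma weighted_picard_fixpoint_solves:
  fixes F :: "real \<Rightarrow> 'a::banach \<Rightarrow> 'a"
  assumes cont: "\<And>y. continuous_on UNIV y \<Longrightarrow> continuous_on UNIV (\<lambda>t. F t (y t))"
    and "continuous_on UNIV y" and fixpoint: "\<And>t. y t = weighted_picard F K x0 y t"
  defines "x \<equiv> \<lambda>t. exp (K * \<bar>t\<bar>) *\<^sub>R y t"
  shows "x 0 = x0" and "(x has_vector_derivative F t (x t)) (at t)"
proof -
  have x_eq: "x = (\<lambda>t. x0 + integral_from_0 (\<lambda>s. F s (x s)) t)"
  proof
    fix t
    have "x t = exp (K * \<bar>t\<bar>) *\<^sub>R weighted_picard F K x0 y t"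
      using fixpoint[of t] by (simp only: x_def)
    also have "\<dots> = x0 + integral_from_0 (\<lambda>s. F s (x s)) t"
      by (simp add: weighted_picard_def x_def scaleR_scaleR flip: exp_add)
    finally show "x t = x0 + integral_from_0 (\<lambda>s. F s (x s)) t" .
  qed
  show "x 0 = x0"
    by (subst x_eq) simp
  have "continuous_on UNIV x"
    unfolding x_def by (intro continuous_intros assms(2))
  then show "(x has_vector_derivative F t (x t)) (at t)"
    by (subst x_eq) (auto intro!: derivative_eq_intros integral_from_0_has_vector_derivative cont)
qed

text \<open>With \<open>K = 2L + 1\<close> the weighted Picard map contracts by the factor \<open>1/2\<close> on bounded
  continuous functions, so its fixed point yields a solution on all of \<real> at once.\<close>
lemma linear_ode_exists:
  fixes F :: "real \<Rightarrow> 'a::banach \<Rightarrow> 'a"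
  assumes lin: "\<And>t. linear (F t)"
    and bound: "\<And>t x. norm (F t x) \<le> L * norm x"
    and cont: "\<And>y. continuous_on UNIV y \<Longrightarrow> continuous_on UNIV (\<lambda>t. F t (y t))"
  obtains x where "x 0 = x0" and "\<And>t. (x has_vector_derivative F t (x t)) (at t)"
proof -
  define L' where "L' = \<bar>L\<bar>"
  have bound': "norm (F t x) \<le> L' * norm x" for t x
    using bound[of t x] unfolding L'_def
    by (meson abs_ge_self mult_right_mono norm_ge_zero order_trans)
  have "0 \<le> L'" by (simp add: L'_def)
  define K where "K = 2 * L' + 1"
  have "K > 0" using \<open>0 \<le> L'\<close> by (simp add: K_def)
  define \<Psi> where "\<Psi> X = Bcontfun (weighted_picard F K x0 (apply_bcontfun X))" for X
  have \<Psi>: "apply_bcontfun (\<Psi> X) = weighted_picard F K x0 (apply_bcontfun X)" for X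
    unfolding \<Psi>_def
    by (intro Bcontfun_inverse weighted_picard_bcontfun[OF bound' \<open>0 \<le> L'\<close> cont \<open>K > 0\<close>]
        apply_bcontfun)
  have "dist (\<Psi> X) (\<Psi> Y) \<le> 1/2 * dist X Y" for X Y
  proof (rule dist_bound)
    fix t
    have "dist (\<Psi> X t) (\<Psi> Y t) \<le> L' * dist X Y / K"
      using weighted_picard_contraction[OF lin bound' \<open>0 \<le> L'\<close> cont \<open>K > 0\<close>,
          of "apply_bcontfun X" "apply_bcontfun Y" "dist X Y" x0 t] dist_bounded[of X _ Y]
      by (simp add: \<Psi> dist_norm)
    also have "\<dots> \<le> 1/2 * dist X Y"
      using \<open>0 \<le> L'\<close> by (simp add: K_def field_simps)
    finally show "dist (\<Psi> X t) (\<Psi> Y t) \<le> 1/2 * dist X Y" .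
  qed
  then obtain X where X: "\<Psi> X = X"
    using banach_fix_type[of "1/2" \<Psi>] by auto
  have "X t = weighted_picard F K x0 X t" for t
    using fun_cong[OF \<Psi>[of X, unfolded X], of t] .
  from weighted_picard_fixpoint_solves[OF cont continuous_on_apply_bcontfun this]
  show ?thesis by (rule that)
qed

lemma has_real_derivative_inner_self:
  fixes x :: "real \<Rightarrow> 'a::real_inner"
  assumes "(x has_vector_derivative x') (at t)"
  shows "((\<lambda>s. inner (x s) (x s)) has_real_derivative 2 * inner (x t) x') (at t)"
proof -
  have "((\<lambda>s. inner (x s) (x s)) has_derivative
      (\<lambda>h. inner (x t) (h *\<^sub>R x') + inner (h *\<^sub>R x') (x t))) (at t)"
    using assms unfolding has_vector_derivative_def by (intro has_derivative_inner)
  then show ?thesis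
    unfolding has_field_derivative_def
    by (rule has_derivative_eq_rhs) (simp add: fun_eq_iff inner_commute algebra_simps)
qed

text \<open>A Gronwall-type uniqueness argument: \<open>\<parallel>x t\<parallel>\<^sup>2 exp (-2 L t)\<close> is nonincreasing.\<close>
lemma eq_0_if_norm_derivative_le_nonneg:
  fixes x x' :: "real \<Rightarrow> 'a::real_inner"
  assumes deriv: "\<And>t. (x has_vector_derivative x' t) (at t)"
    and bound: "\<And>t. norm (x' t) \<le> L * norm (x t)"
    and "x 0 = 0" and "0 \<le> t"
  shows "x t = 0"
proof -
  define \<phi> where "\<phi> s = inner (x s) (x s) * exp (- 2 * L * s)" for s
  have "\<phi> t \<le> \<phi> 0"
  proof (rule DERIV_nonpos_imp_nonincreasing[OF \<open>0 \<le> t\<close>])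
    fix s
    have "inner (x s) (x' s) \<le> norm (x s) * (L * norm (x s))"
      using bound[of s]
      by (meson Cauchy_Schwarz_ineq2 abs_le_D1 mult_left_mono norm_ge_zero order_trans)
    then have "2 * inner (x s) (x' s) - 2 * L * inner (x s) (x s) \<le> 0"
      by (simp add: power2_norm_eq_inner[symmetric] power2_eq_square algebra_simps)
    then have "(2 * inner (x s) (x' s) - 2 * L * inner (x s) (x s)) * exp (- 2 * L * s) \<le> 0"
      by (simp add: mult_nonpos_nonneg)
    moreover have "(\<phi> has_real_derivative
        (2 * inner (x s) (x' s) - 2 * L * inner (x s) (x s)) * exp (- 2 * L * s)) (at s)"
      unfolding \<phi>_def
      by (auto intro!: derivative_eq_intros has_real_derivative_inner_self deriv
          simp: algebra_simps)
    ultimately show "\<exists>y. (\<phi> has_real_derivative y) (at s) \<and> y \<le> 0" by blast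
  qed
  then have "inner (x t) (x t) \<le> 0"
    by (simp add: \<phi>_def \<open>x 0 = 0\<close> mult_le_0_iff)
  then show ?thesis using inner_gt_zero_iff[of "x t"] by linarith
qed

lemma eq_0_if_norm_derivative_le:
  fixes x x' :: "real \<Rightarrow> 'a::real_inner"
  assumes deriv: "\<And>t. (x has_vector_derivative x' t) (at t)"
    and bound: "\<And>t. norm (x' t) \<le> L * norm (x t)"
    and "x 0 = 0"
  shows "x t = 0"
proof (cases "0 \<le> t")
  case True
  then show ?thesis using eq_0_if_norm_derivative_le_nonneg[OF assms] by blast
next
  case False
  have d: "((\<lambda>s. x (- s)) has_vector_derivative - x' (- s)) (at s)" for s
    using vector_diff_chain_at[OF has_vector_derivative_minus[OF has_vector_derivative_id]
        deriv[of "- s"]] by (simp add: o_def)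
  have b: "norm (- x' (- s)) \<le> L * norm (x (- s))" for s
    using bound[of "- s"] by simp
  show ?thesis
    using eq_0_if_norm_derivative_le_nonneg[OF d b, of "- t"] False \<open>x 0 = 0\<close> by simp
qed

section \<open>The equation (P) and its monodromy\<close>

lemma has_vector_derivative_Pair_iff:
  "((\<lambda>z. (p z, q z)) has_vector_derivative (u, v)) (at t) \<longleftrightarrow>
   (p has_vector_derivative u) (at t) \<and> (q has_vector_derivative v) (at t)"
proof
  assume "((\<lambda>z. (p z, q z)) has_vector_derivative (u, v)) (at t)"
  from bounded_linear.has_vector_derivative[OF bounded_linear_fst this]
       bounded_linear.has_vector_derivative[OF bounded_linear_snd this]
  show "(p has_vector_derivative u) (at t) \<and> (q has_vector_derivative v) (at t)"
    by simp
qed (auto intro: has_vector_derivative_Pair)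

definition P_field ::
    "real \<Rightarrow> (real \<Rightarrow> real) \<Rightarrow> complex \<Rightarrow> real \<Rightarrow> complex \<times> complex \<Rightarrow> complex \<times> complex"
  where "P_field c f lam z x =
    (snd x, of_real (2 * c * gam c) * lam * snd x
              - of_real (gam c) * (lam^2 + of_real (cos (f z))) * fst x)"

lemma P_sol_iff_P_field:
  "P_sol c f lam (p, p') \<longleftrightarrow>
     (\<forall>z. ((\<lambda>z. (p z, p' z)) has_vector_derivative P_field c f lam z (p z, p' z)) (at z))"
  by (simp add: P_sol_def P_field_def has_vector_derivative_Pair_iff)

lemma linear_P_field: "linear (P_field c f lam z)"
  by (rule linearI) (auto simp: P_field_def algebra_simps)

lemma norm_P_field_le:
  "norm (P_field c f lam z x)
     \<le> (1 + \<bar>2 * c * gam c\<bar> * cmod lam + \<bar>gam c\<bar> * ((cmod lam)^2 + 1)) * norm x"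
proof -
  let ?a = "of_real (2 * c * gam c) * lam"
    and ?b = "of_real (gam c) * (lam^2 + of_real (cos (f z)))"
  have "cmod (lam^2 + of_real (cos (f z))) \<le> cmod (lam^2) + cmod (of_real (cos (f z)))"
    by (rule norm_triangle_ineq)
  also have "\<dots> \<le> (cmod lam)^2 + 1"
    using abs_cos_le_one[of "f z"] by (simp add: norm_power)
  finally have b: "cmod ?b \<le> \<bar>gam c\<bar> * ((cmod lam)^2 + 1)"
    by (simp add: norm_mult mult_left_mono)
  have fst_snd: "cmod (fst x) \<le> norm x" "cmod (snd x) \<le> norm x"
    using norm_fst_le[of "fst x" "snd x"] norm_snd_le[of "snd x" "fst x"] by simp_all
  have "norm (P_field c f lam z x)
      \<le> cmod (snd x) + (cmod ?a * cmod (snd x) + cmod ?b * cmod (fst x))"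
    unfolding P_field_def
    using norm_Pair_le[of "snd x" "?a * snd x - ?b * fst x"]
      norm_triangle_ineq4[of "?a * snd x" "?b * fst x"]
    by (simp add: norm_mult)
  also have "\<dots> \<le> norm x + (cmod ?a * norm x + (\<bar>gam c\<bar> * ((cmod lam)^2 + 1)) * norm x)"
    using fst_snd b by (intro add_mono mult_mono) auto
  finally show ?thesis
    by (simp add: norm_mult abs_mult algebra_simps)
qed

lemma continuous_on_P_field:
  assumes "continuous_on UNIV f" and "continuous_on UNIV y"
  shows "continuous_on UNIV (\<lambda>z. P_field c f lam z (y z))"
  unfolding P_field_def by (intro continuous_intros assms)

lemma P_sol_exists:
  assumes "continuous_on UNIV f"
  shows "\<exists>pq. P_sol c f lam pq \<and> fst pq 0 = u \<and> snd pq 0 = v"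
proof -
  obtain x where "x 0 = (u, v)" and "\<And>z. (x has_vector_derivative P_field c f lam z (x z)) (at z)"
    using linear_ode_exists[OF linear_P_field[of c f lam] norm_P_field_le[of c f lam]
        continuous_on_P_field[OF assms], of "(u, v)"] by blast
  then show ?thesis
    by (intro exI[of _ "(\<lambda>z. fst (x z), \<lambda>z. snd (x z))"]) (simp add: P_sol_iff_P_field)
qed

lemma P_sol_lincomb:
  assumes "P_sol c f lam (p, p')" and "P_sol c f lam (q, q')"
  shows "P_sol c f lam (\<lambda>z. \<alpha> * p z + \<beta> * q z, \<lambda>z. \<alpha> * p' z + \<beta> * q' z)"
  unfolding P_sol_def fst_conv snd_conv
proof (intro allI conjI)
  fix z
  let ?a = "of_real (2 * c * gam c) * lam"
    and ?b = "of_real (gam c) * (lam^2 + of_real (cos (f z)))"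
  have d: "(p has_vector_derivative p' z) (at z)" "(q has_vector_derivative q' z) (at z)"
    "(p' has_vector_derivative ?a * p' z - ?b * p z) (at z)"
    "(q' has_vector_derivative ?a * q' z - ?b * q z) (at z)"
    using assms unfolding P_sol_def by auto
  show "((\<lambda>z. \<alpha> * p z + \<beta> * q z) has_vector_derivative \<alpha> * p' z + \<beta> * q' z) (at z)"
    by (intro has_vector_derivative_add has_vector_derivative_mult_right d)
  have "((\<lambda>z. \<alpha> * p' z + \<beta> * q' z) has_vector_derivative
      \<alpha> * (?a * p' z - ?b * p z) + \<beta> * (?a * q' z - ?b * q z)) (at z)"
    by (intro has_vector_derivative_add has_vector_derivative_mult_right d)
  then show "((\<lambda>z. \<alpha> * p' z + \<beta> * q' z) has_vector_derivative
      ?a * (\<alpha> * p' z + \<beta> * q' z) - ?b * (\<alpha> * p z + \<beta> * q z)) (at z)"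
    by (simp add: algebra_simps)
qed

lemma P_sol_eq_0:
  assumes "P_sol c f lam (p, p')" and "p 0 = 0" and "p' 0 = 0"
  shows "p z = 0" and "p' z = 0"
proof -
  have d: "((\<lambda>z. (p z, p' z)) has_vector_derivative P_field c f lam t (p t, p' t)) (at t)" for t
    using assms(1) unfolding P_sol_iff_P_field by blast
  have "(\<lambda>z. (p z, p' z)) z = 0"
    by (rule eq_0_if_norm_derivative_le[OF d norm_P_field_le]) (simp add: assms zero_prod_def)
  then show "p z = 0" and "p' z = 0" by (simp_all add: zero_prod_def)
qed

lemma P_sol_unique:
  assumes "P_sol c f lam pq1" and "P_sol c f lam pq2"
    and "fst pq1 0 = fst pq2 0" and "snd pq1 0 = snd pq2 0"
  shows "pq1 = pq2"
proof -
  obtain p p' q q' where pq: "pq1 = (p, p')" "pq2 = (q, q')" by fastforce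
  have "P_sol c f lam (\<lambda>z. 1 * p z + (-1) * q z, \<lambda>z. 1 * p' z + (-1) * q' z)"
    using assms pq by (intro P_sol_lincomb) auto
  from P_sol_eq_0[OF this] show ?thesis
    using assms pq by (simp add: fun_eq_iff)
qed

lemma P_sol_THE_initial_value:
  fixes c :: real and lam u v :: complex
  assumes "continuous_on UNIV f"
  defines "pq \<equiv> THE pq. P_sol c f lam pq \<and> fst pq 0 = u \<and> snd pq 0 = v"
  shows "P_sol c f lam pq \<and> fst pq 0 = u \<and> snd pq 0 = v"
  unfolding pq_def
  by (rule theI', rule ex_ex1I[OF P_sol_exists[OF assms(1)]]) (metis P_sol_unique)

lemma fund1_P_sol:
  assumes "continuous_on UNIV f"
  shows "P_sol c f lam (fund1 c f lam)" "fst (fund1 c f lam) 0 = 1" "snd (fund1 c f lam) 0 = 0"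
  using P_sol_THE_initial_value[OF assms] unfolding fund1_def by auto

lemma fund2_P_sol:
  assumes "continuous_on UNIV f"
  shows "P_sol c f lam (fund2 c f lam)" "fst (fund2 c f lam) 0 = 0" "snd (fund2 c f lam) 0 = 1"
  using P_sol_THE_initial_value[OF assms] unfolding fund2_def by auto

lemma P_sol_fund_expansion:
  assumes "continuous_on UNIV f" and "P_sol c f lam (p, p')"
  shows "p z = p 0 * fst (fund1 c f lam) z + p' 0 * fst (fund2 c f lam) z"
    and "p' z = p 0 * snd (fund1 c f lam) z + p' 0 * snd (fund2 c f lam) z"
proof -
  obtain y1 y1' y2 y2' where y: "fund1 c f lam = (y1, y1')" "fund2 c f lam = (y2, y2')"
    by fastforce
  note fund = fund1_P_sol[OF assms(1), of c lam] fund2_P_sol[OF assms(1), of c lam]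
  define u v where "u = p 0" and "v = p' 0"
  have "P_sol c f lam (\<lambda>z. u * y1 z + v * y2 z, \<lambda>z. u * y1' z + v * y2' z)"
    using fund y by (intro P_sol_lincomb) auto
  then have "(p, p') = (\<lambda>z. u * y1 z + v * y2 z, \<lambda>z. u * y1' z + v * y2' z)"
    by (rule P_sol_unique[OF assms(2)]) (use fund y in \<open>simp_all add: u_def v_def\<close>)
  then have "p z = u * y1 z + v * y2 z" and "p' z = u * y1' z + v * y2' z"
    by simp_all
  then show "p z = p 0 * fst (fund1 c f lam) z + p' 0 * fst (fund2 c f lam) z"
    and "p' z = p 0 * snd (fund1 c f lam) z + p' 0 * snd (fund2 c f lam) z"
    using y by (simp_all add: u_def v_def)
qed

lemma P_sol_shift:
  assumes "P_sol c f lam (p, p')" and per: "\<And>z. cos (f (z + T)) = cos (f z)"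
  shows "P_sol c f lam (\<lambda>z. p (z + T), \<lambda>z. p' (z + T))"
  unfolding P_sol_def fst_conv snd_conv
proof (intro allI conjI)
  fix z
  have shift: "((\<lambda>z. z + T) has_vector_derivative 1) (at z)"
    by (auto intro!: derivative_eq_intros)
  have "(p has_vector_derivative p' (z + T)) (at (z + T))"
    and "(p' has_vector_derivative of_real (2 * c * gam c) * lam * p' (z + T)
          - of_real (gam c) * (lam^2 + of_real (cos (f (z + T)))) * p (z + T)) (at (z + T))"
    using assms(1) unfolding P_sol_def by auto
  from this[THEN vector_diff_chain_at[OF shift]]
  show "((\<lambda>z. p (z + T)) has_vector_derivative p' (z + T)) (at z)"
    and "((\<lambda>z. p' (z + T)) has_vector_derivative of_real (2 * c * gam c) * lam * p' (z + T)
          - of_real (gam c) * (lam^2 + of_real (cos (f z))) * p (z + T)) (at z)"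
    by (simp_all add: o_def per)
qed

text \<open>Cayley--Hamilton for the monodromy matrix, read off along solutions of (P).\<close>
lemma P_sol_monodromy_recurrence:
  assumes cont: "continuous_on UNIV f" and P: "P_sol c f lam (p, p')"
    and per: "\<And>z. cos (f (z + T)) = cos (f z)"
    and M: "monodromy c f T lam = (a, b, d, e)"
  shows "p (z + T + T) - (a + e) * p (z + T) + (a * e - b * d) * p z = 0"
proof -
  have P1: "P_sol c f lam (\<lambda>z. p (z + T), \<lambda>z. p' (z + T))"
    using P_sol_shift[OF P per] .
  have P2: "P_sol c f lam (\<lambda>z. p (z + T + T), \<lambda>z. p' (z + T + T))"
    using P_sol_shift[OF P1 per] by simp
  let ?u = "\<lambda>z. 1 * (1 * p (z + T + T) + (- (a + e)) * p (z + T)) + (a * e - b * d) * p z"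
  let ?u' = "\<lambda>z. 1 * (1 * p' (z + T + T) + (- (a + e)) * p' (z + T)) + (a * e - b * d) * p' z"
  have "P_sol c f lam (?u, ?u')"
    by (intro P_sol_lincomb P2 P1 P)
  moreover have "?u 0 = 0" and "?u' 0 = 0"
    using P_sol_fund_expansion[OF cont P, of T] P_sol_fund_expansion[OF cont P1, of T] M
    by (simp_all add: monodromy_def algebra_simps)
  ultimately have "?u z = 0" by (rule P_sol_eq_0)
  then show ?thesis by (simp add: algebra_simps)
qed

text \<open>Abel's identity: the Wronskian of (P) grows like \<open>exp (2 c \<gamma> \<lambda> z)\<close>.\<close>
lemma monodromy_det:
  assumes cont: "continuous_on UNIV f" and M: "monodromy c f T lam = (a, b, d, e)"
  shows "a * e - b * d = exp (of_real (2 * c * gam c * T) * lam)"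
proof -
  obtain y1 y1' y2 y2' where y: "fund1 c f lam = (y1, y1')" "fund2 c f lam = (y2, y2')"
    by fastforce
  define k where "k = of_real (2 * c * gam c) * lam"
  define W where "W z = (y1 z * y2' z - y2 z * y1' z) * exp (- k * of_real z)" for z
  have "(W has_vector_derivative 0) (at z)" for z
  proof -
    let ?b = "of_real (gam c) * (lam^2 + of_real (cos (f z)))"
    have d: "(y1 has_vector_derivative y1' z) (at z)" "(y2 has_vector_derivative y2' z) (at z)"
      "(y1' has_vector_derivative k * y1' z - ?b * y1 z) (at z)"
      "(y2' has_vector_derivative k * y2' z - ?b * y2 z) (at z)"
      using fund1_P_sol(1)[OF cont, of c lam] fund2_P_sol(1)[OF cont, of c lam] y
      unfolding P_sol_def k_def by auto
    have e: "((\<lambda>z. exp (- k * of_real z)) has_vector_derivative - k * exp (- k * of_real z)) (at z)"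
      by (rule has_vector_derivative_real_field) (auto intro!: derivative_eq_intros)
    have "(W has_vector_derivative
       (y1 z * y2' z - y2 z * y1' z) * (- k * exp (- k * of_real z)) +
       ((y1 z * (k * y2' z - ?b * y2 z) + y1' z * y2' z)
         - (y2 z * (k * y1' z - ?b * y1 z) + y2' z * y1' z)) * exp (- k * of_real z)) (at z)"
      unfolding W_def by (intro has_vector_derivative_mult has_vector_derivative_diff d e)
    then show ?thesis
      by (simp add: algebra_simps)
  qed
  then have "W T = W 0"
    using has_derivative_zero_constant[of UNIV W] by (auto simp: has_vector_derivative_def)
  also have "W 0 = 1"
    using fund1_P_sol[OF cont, of c lam] fund2_P_sol[OF cont, of c lam] y by (simp add: W_def)
  finally have "(y1 T * y2' T - y2 T * y1' T) = exp (k * of_real T)"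
    by (simp add: W_def exp_minus field_simps)
  then show ?thesis
    using M y by (simp add: monodromy_def k_def mult_ac)
qed

section \<open>Eigenfunctions from the half-angle of the wave\<close>

lemma pendulum_cos_half_second_derivative:
  fixes k E :: real and f f' f'' :: "real \<Rightarrow> real"
  assumes "k \<noteq> 0"
    and df: "\<And>z. (f has_real_derivative f' z) (at z)"
    and df': "\<And>z. (f' has_real_derivative f'' z) (at z)"
    and ode: "\<And>z. k * f'' z + sin (f z) = 0"
    and energy: "\<And>z. k / 2 * (f' z)^2 + 1 - cos (f z) = E"
  shows "((\<lambda>z. cos (f z / 2)) has_real_derivative - sin (f z / 2) * f' z / 2) (at z)"
    and "((\<lambda>z. - sin (f z / 2) * f' z / 2) has_real_derivative
           (1 - E/2 - cos (f z)) / k * cos (f z / 2)) (at z)"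
proof -
  show "((\<lambda>z. cos (f z / 2)) has_real_derivative - sin (f z / 2) * f' z / 2) (at z)"
    by (auto intro!: derivative_eq_intros df)
  define s where "s = sin (f z / 2)"
  define co where "co = cos (f z / 2)"
  have sin_f: "sin (f z) = 2 * s * co" and cos_f: "cos (f z) = 1 - 2 * s^2"
    using sin_double[of "f z / 2"] cos_double_sin[of "f z / 2"] by (simp_all add: s_def co_def)
  have kf'2: "k * (f' z)^2 = 2 * (E - 2 * s^2)"
    using energy[of z] unfolding cos_f by (simp add: field_simps)
  have kf'': "k * f'' z = - 2 * s * co"
    using ode[of z] unfolding sin_f by linarith
  have "- co * (k * (f' z)^2) / 4 - s * (k * f'' z) / 2 = (1 - E/2 - cos (f z)) * co"
    unfolding kf'2 kf'' cos_f by (simp add: field_simps power2_eq_square)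
  then have "- co * f' z / 2 * f' z / 2 - s * f'' z / 2 = (1 - E/2 - cos (f z)) / k * co"
    using \<open>k \<noteq> 0\<close> by (simp add: field_simps power2_eq_square)
  moreover have "((\<lambda>z. - sin (f z / 2) * f' z / 2) has_real_derivative
      - co * f' z / 2 * f' z / 2 - s * f'' z / 2) (at z)"
    by (auto intro!: derivative_eq_intros df df' simp: s_def co_def field_simps)
  ultimately show "((\<lambda>z. - sin (f z / 2) * f' z / 2) has_real_derivative
           (1 - E/2 - cos (f z)) / k * cos (f z / 2)) (at z)"
    by (simp add: co_def)
qed

lemma pendulum_cos_half_neq_0:
  fixes k E :: real
  assumes "k > 0" and "E < 2" and energy: "k / 2 * f'^2 + 1 - cos f = E"
  shows "cos (f / 2) \<noteq> 0"
proof
  assume "cos (f / 2) = 0"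
  then have "cos f = -1"
    using cos_double_cos[of "f / 2"] by simp
  moreover have "k / 2 * f'^2 \<ge> 0" using \<open>k > 0\<close> by simp
  ultimately show False using energy \<open>E < 2\<close> by linarith
qed

lemma in_sigmaQ_if_real_solution:
  fixes q q' :: "real \<Rightarrow> real"
  assumes "\<And>z. (q has_real_derivative q' z) (at z)"
    and "\<And>z. (q' has_real_derivative ((gam c)^2 * \<alpha>^2 - gam c * cos (f z)) * q z) (at z)"
    and "bounded (range q)" and "q z0 \<noteq> 0"
  shows "complex_of_real \<alpha> \<in> sigmaQ c f"
proof -
  define Q Q' where "Q z = complex_of_real (q z)" and "Q' z = complex_of_real (q' z)" for z
  have "(Q has_vector_derivative Q' z) (at z)" for z
    unfolding Q_def[abs_def] Q'_def by (rule has_vector_derivative_of_real[OF assms(1)])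
  moreover have "(Q' has_vector_derivative
      of_real ((gam c)^2) * (complex_of_real \<alpha>)^2 * Q z - of_real (gam c * cos (f z)) * Q z) (at z)"
    for z
    unfolding Q_def Q'_def[abs_def]
    using has_vector_derivative_of_real[OF assms(2), where 'a=complex] by (simp add: algebra_simps)
  moreover have "bounded (range Q)"
    using assms(3) unfolding bounded_iff Q_def by simp
  moreover have "Q z0 \<noteq> 0"
    using assms(4) by (simp add: Q_def)
  ultimately show ?thesis
    unfolding sigmaQ_def by blast
qed

lemma in_sigmaQ_if_pendulum_wave:
  fixes k E \<alpha> :: real and g g' g'' :: "real \<Rightarrow> real"
  assumes "k > 0" and "E < 2"
    and dg: "\<And>z. (g has_real_derivative g' z) (at z)"
    and dg': "\<And>z. (g' has_real_derivative g'' z) (at z)"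
    and ode: "\<And>z. k * g'' z + sin (g z) = 0"
    and energy: "\<And>z. k / 2 * (g' z)^2 + 1 - cos (g z) = E"
    and coeff: "\<And>z. (gam c)^2 * \<alpha>^2 - gam c * cos (f z) = (1 - E/2 - cos (g z)) / k"
  shows "complex_of_real \<alpha> \<in> sigmaQ c f"
proof -
  have "k \<noteq> 0" using \<open>k > 0\<close> by simp
  note q = pendulum_cos_half_second_derivative[OF this dg dg' ode energy]
  show ?thesis
  proof (rule in_sigmaQ_if_real_solution[OF q(1)])
    show "((\<lambda>z. - sin (g z / 2) * g' z / 2) has_real_derivative
        ((gam c)^2 * \<alpha>^2 - gam c * cos (f z)) * cos (g z / 2)) (at z)" for z
      using q(2)[of z] by (simp add: coeff)
    show "bounded (range (\<lambda>z. cos (g z / 2)))"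
      by (auto simp: bounded_iff intro!: exI[of _ 1])
    show "cos (g 0 / 2) \<noteq> 0"
      using pendulum_cos_half_neq_0[OF \<open>k > 0\<close> \<open>E < 2\<close> energy] .
  qed
qed

text \<open>For \<open>c\<^sup>2 > 1\<close> the eigenfunction is \<open>cos (f/2)\<close>.  For \<open>c\<^sup>2 < 1\<close>, the shifted wave \<open>f + \<pi>\<close>
  solves the pendulum equation with \<open>k = 1 - c\<^sup>2 > 0\<close> and energy \<open>2 - E\<close>, and the same
  Q-equation; this gives the eigenfunction \<open>cos ((f + \<pi>)/2) = - sin (f/2)\<close>.\<close>
lemma librational_wave_in_sigmaQ:
  fixes c E :: real and f f' f'' :: "real \<Rightarrow> real"
  assumes "c^2 \<noteq> 1"
    and df: "\<And>z. (f has_real_derivative f' z) (at z)"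
    and df': "\<And>z. (f' has_real_derivative f'' z) (at z)"
    and ode: "\<And>z. (c^2 - 1) * f'' z + sin (f z) = 0"
    and energy: "\<And>z. 1/2 * (c^2 - 1) * (f' z)^2 + 1 - cos (f z) = E"
    and "0 < E" and "E < 2"
  shows "\<exists>\<alpha>>0. complex_of_real \<alpha> \<in> sigmaQ c f"
proof -
  define k where "k = c^2 - 1"
  have gam: "gam c = 1 / k" by (simp add: gam_def k_def)
  have "k \<noteq> 0" using \<open>c^2 \<noteq> 1\<close> by (simp add: k_def)
  have energy': "k / 2 * (f' z)^2 + 1 - cos (f z) = E" for z
    using energy[of z] by (simp add: k_def)
  consider "k > 0" | "k < 0" using \<open>k \<noteq> 0\<close> by linarith
  then show ?thesis
  proof cases
    case 1
    define \<alpha> where "\<alpha> = sqrt (k * (1 - E/2))"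
    have "\<alpha> > 0" and \<alpha>2: "\<alpha>^2 = k * (1 - E/2)"
      using 1 \<open>E < 2\<close> by (simp_all add: \<alpha>_def)
    have "complex_of_real \<alpha> \<in> sigmaQ c f"
      using 1 \<open>E < 2\<close> df df' ode[folded k_def] energy'
      by (rule in_sigmaQ_if_pendulum_wave)
         (unfold gam \<alpha>2, use \<open>k \<noteq> 0\<close> in \<open>simp add: field_simps power2_eq_square\<close>)
    with \<open>\<alpha> > 0\<close> show ?thesis by blast
  next
    case 2
    define \<alpha> where "\<alpha> = sqrt (- k * E / 2)"
    have "\<alpha> > 0" and \<alpha>2: "\<alpha>^2 = - k * E / 2"
      using 2 \<open>E > 0\<close> by (simp_all add: \<alpha>_def mult_neg_pos mult_nonpos_nonneg)
    have df_shift: "((\<lambda>z. f z + pi) has_real_derivative f' z) (at z)" for z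
      by (auto intro!: derivative_eq_intros df)
    have ode_shift: "- k * f'' z + sin (f z + pi) = 0" for z
      using ode[of z] by (simp add: k_def algebra_simps)
    have energy_shift: "- k / 2 * (f' z)^2 + 1 - cos (f z + pi) = 2 - E" for z
      using energy'[of z] by simp
    have "complex_of_real \<alpha> \<in> sigmaQ c f"
      using 2 \<open>E > 0\<close>
      by (intro in_sigmaQ_if_pendulum_wave[OF _ _ df_shift df' ode_shift energy_shift])
         (unfold gam \<alpha>2, use \<open>k \<noteq> 0\<close> in \<open>simp_all add: field_simps power2_eq_square\<close>)
    with \<open>\<alpha> > 0\<close> show ?thesis by blast
  qed
qed

section \<open>Floquet multipliers at points of the spectrum\<close>

text \<open>The identity \<open>\<gamma> c\<^sup>2 = \<gamma> + 1\<close> gives \<open>\<mu>\<^sup>2 = \<gamma>\<^sup>2 \<lambda>\<^sup>2 + \<gamma> \<lambda>\<^sup>2\<close>, which cancels the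
  zeroth-order terms.\<close>
lemma P_sol_exp_mult:
  fixes q q' :: "real \<Rightarrow> complex"
  assumes "c^2 \<noteq> 1"
    and dq: "\<And>z. (q has_vector_derivative q' z) (at z)"
    and dq': "\<And>z. (q' has_vector_derivative
               of_real ((gam c)^2) * lam^2 * q z - of_real (gam c * cos (f z)) * q z) (at z)"
  defines "\<mu> \<equiv> of_real (c * gam c) * lam"
  shows "P_sol c f lam (\<lambda>z. exp (\<mu> * of_real z) * q z, \<lambda>z. exp (\<mu> * of_real z) * (q' z + \<mu> * q z))"
  unfolding P_sol_def fst_conv snd_conv
proof (intro allI conjI)
  fix z
  let ?e = "\<lambda>z. exp (\<mu> * of_real z)"
  have de: "(?e has_vector_derivative \<mu> * ?e z) (at z)"
    by (rule has_vector_derivative_real_field) (auto intro!: derivative_eq_intros)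
  show "((\<lambda>z. ?e z * q z) has_vector_derivative ?e z * (q' z + \<mu> * q z)) (at z)"
    using has_vector_derivative_mult[OF de dq] by (simp add: algebra_simps)
  have "gam c * (c^2 - 1) = 1"
    using \<open>c^2 \<noteq> 1\<close> by (simp add: gam_def)
  moreover have "(c * gam c)^2 = gam c * (gam c * (c^2 - 1)) + (gam c)^2"
    by (simp add: algebra_simps power2_eq_square)
  ultimately have "(c * gam c)^2 = (gam c)^2 + gam c"
    by simp
  then have \<mu>2: "\<mu>^2 = of_real ((gam c)^2) * lam^2 + of_real (gam c) * lam^2"
    unfolding \<mu>_def power_mult_distrib of_real_power[symmetric] by (simp add: distrib_right)
  have D: "((\<lambda>z. ?e z * (q' z + \<mu> * q z)) has_vector_derivative
      ?e z * (of_real ((gam c)^2) * lam^2 * q z - of_real (gam c * cos (f z)) * q z + \<mu> * q' z)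
      + \<mu> * ?e z * (q' z + \<mu> * q z)) (at z)"
    by (rule has_vector_derivative_mult[OF de has_vector_derivative_add[OF dq'
        has_vector_derivative_mult_right[OF dq]]])
  have "?e z * (of_real ((gam c)^2) * lam^2 * q z - of_real (gam c * cos (f z)) * q z + \<mu> * q' z)
        + \<mu> * ?e z * (q' z + \<mu> * q z)
      = of_real (2 * c * gam c) * lam * (?e z * (q' z + \<mu> * q z))
        - of_real (gam c) * (lam^2 + of_real (cos (f z))) * (?e z * q z)
        + ?e z * q z * (of_real ((gam c)^2) * lam^2 + of_real (gam c) * lam^2 - \<mu>^2)"
    by (simp add: \<mu>_def algebra_simps power2_eq_square)
  also have "\<dots> = of_real (2 * c * gam c) * lam * (?e z * (q' z + \<mu> * q z))
        - of_real (gam c) * (lam^2 + of_real (cos (f z))) * (?e z * q z)"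
    by (simp add: \<mu>2)
  finally show "((\<lambda>z. ?e z * (q' z + \<mu> * q z)) has_vector_derivative
      of_real (2 * c * gam c) * lam * (?e z * (q' z + \<mu> * q z))
        - of_real (gam c) * (lam^2 + of_real (cos (f z))) * (?e z * q z)) (at z)"
    using D by simp
qed

lemma floquet_plus_minus:
  assumes "monodromy c f T lam = (a, b, d, e)"
  shows "floquet_plus c f T lam + floquet_minus c f T lam = a + e"
    and "floquet_plus c f T lam * floquet_minus c f T lam = a * e - b * d"
proof -
  define s where "s = csqrt ((a + e)^2 - 4 * (a * e - b * d))"
  have plus: "floquet_plus c f T lam = (a + e + s) / 2"
    and minus: "floquet_minus c f T lam = (a + e - s) / 2"
    using assms by (simp_all add: floquet_plus_def floquet_minus_def s_def)
  have "s^2 = (a + e)^2 - 4 * (a * e - b * d)"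
    by (simp add: s_def)
  then show "floquet_plus c f T lam + floquet_minus c f T lam = a + e"
    and "floquet_plus c f T lam * floquet_minus c f T lam = a * e - b * d"
    unfolding plus minus by (simp_all add: field_simps power2_eq_square)
qed

lemma bounded_quasiperiodic_eq_0:
  fixes C :: "real \<Rightarrow> complex"
  assumes shift: "\<And>z. C (z + T) = r * C z" and bounded: "\<And>z. cmod (C z) \<le> K"
    and "cmod r \<noteq> 1"
  shows "C z = 0"
proof (rule ccontr)
  assume "C z \<noteq> 0"
  then have Cz: "cmod (C z) > 0" by simp
  have iterate: "C (w + real n * T) = r^n * C w" for n w
  proof (induction n)
    case (Suc n)
    have "C (w + real (Suc n) * T) = C ((w + real n * T) + T)" by (simp add: algebra_simps)
    then show ?case using Suc shift by simp
  qed simp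
  have "K \<ge> 0" using order_trans[OF norm_ge_zero bounded[of z]] .
  consider "cmod r > 1" | "cmod r < 1" using \<open>cmod r \<noteq> 1\<close> by linarith
  then show False
  proof cases
    case 1
    obtain n where "K / cmod (C z) < cmod r ^ n" using real_arch_pow[OF 1] by blast
    then have "K < cmod r ^ n * cmod (C z)" using Cz by (simp add: divide_less_eq)
    also have "\<dots> = cmod (C (z + real n * T))" by (simp add: iterate norm_mult norm_power)
    finally show False using bounded[of "z + real n * T"] by simp
  next
    case 2
    have "cmod (C z) / (K + 1) > 0" using Cz \<open>K \<ge> 0\<close> by simp
    from real_arch_pow_inv[OF this 2]
    obtain n where n: "cmod r ^ n < cmod (C z) / (K + 1)" by blast
    have "cmod (C z) = cmod r ^ n * cmod (C (z - real n * T))"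
      using iterate[where n = n and w = "z - real n * T"] by (simp add: norm_mult norm_power)
    also have "\<dots> \<le> cmod r ^ n * (K + 1)"
      using bounded[of "z - real n * T"] by (intro mult_left_mono) auto
    also have "\<dots> < cmod (C z)" using n \<open>K \<ge> 0\<close> by (simp add: less_divide_eq)
    finally show False by simp
  qed
qed

text \<open>Split the recurrence into the first-order ones \<open>D\<^sub>i (z + T) = r\<^sub>i D\<^sub>i z\<close> for
  \<open>D\<^sub>1 z = q (z + T) - r\<^sub>2 q z\<close> and \<open>D\<^sub>2 z = q (z + T) - r\<^sub>1 q z\<close>; off the unit circle both must
  vanish, which forces \<open>q = 0\<close> as \<open>r\<^sub>1 \<noteq> r\<^sub>2\<close>.\<close>
lemma norm_eq_1_if_bounded_recurrence:
  fixes q :: "real \<Rightarrow> complex"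
  assumes rec: "\<And>z. q (z + T + T) - (r1 + r2) * q (z + T) + r1 * r2 * q z = 0"
    and "r1 * r2 = 1" and "bounded (range q)" and "q z0 \<noteq> 0"
  shows "cmod r1 = 1"
proof (rule ccontr)
  assume r1: "cmod r1 \<noteq> 1"
  have "cmod r1 * cmod r2 = 1"
    using \<open>r1 * r2 = 1\<close> by (metis norm_mult norm_one)
  then have r2: "cmod r2 \<noteq> 1" using r1 by auto
  obtain K where K: "\<And>z. cmod (q z) \<le> K"
    using \<open>bounded (range q)\<close> unfolding bounded_iff by auto
  have bounded_diff: "cmod (q (z + T) - r * q z) \<le> K + cmod r * K" for z r
    using norm_triangle_ineq4[of "q (z + T)" "r * q z"] K[of "z + T"] K[of z]
      mult_left_mono[OF K[of z], of "cmod r"] by (simp add: norm_mult)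
  have factor: "q (z + T + T) - r * q (z + T) = r' * (q (z + T) - r * q z)"
    if "{r, r'} = {r1, r2}" for z r r'
  proof -
    have "q (z + T + T) - r * q (z + T) - r' * (q (z + T) - r * q z)
        = q (z + T + T) - (r1 + r2) * q (z + T) + r1 * r2 * q z"
      using that by (auto simp: doubleton_eq_iff algebra_simps)
    also have "\<dots> = 0" by (rule rec)
    finally show ?thesis by simp
  qed
  have "q (z + T) - r2 * q z = 0" for z
    by (rule bounded_quasiperiodic_eq_0[where T = T, OF _ bounded_diff r1]) (rule factor, auto)
  moreover have "q (z + T) - r1 * q z = 0" for z
    by (rule bounded_quasiperiodic_eq_0[where T = T, OF _ bounded_diff r2]) (rule factor, auto)
  ultimately have "(r1 - r2) * q z0 = 0"
    by (metis diff_diff_eq2 left_diff_distrib right_minus_eq)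
  moreover have "r1 \<noteq> r2"
  proof
    assume "r1 = r2"
    then have "cmod r1 ^ 2 = 1"
      using \<open>cmod r1 * cmod r2 = 1\<close> by (simp add: power2_eq_square)
    then show False using r1 norm_ge_zero[of r1] by (simp add: power2_eq_1_iff)
  qed
  ultimately show False using \<open>q z0 \<noteq> 0\<close> by simp
qed

lemma floquet_plus_mult_minus:
  assumes "continuous_on UNIV f"
  shows "floquet_plus c f T lam * floquet_minus c f T lam = exp (of_real (2 * c * gam c * T) * lam)"
proof -
  obtain a b d e where M: "monodromy c f T lam = (a, b, d, e)"
    by (metis prod_cases4)
  show ?thesis
    using floquet_plus_minus(2)[OF M] monodromy_det[OF assms M] by simp
qed

text \<open>Dividing the recurrence of \<open>p = exp (\<mu> z) q\<close> by \<open>exp (\<mu> (z + 2T))\<close>.\<close>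
lemma Q_sol_floquet_recurrence:
  fixes q q' :: "real \<Rightarrow> complex"
  assumes "c^2 \<noteq> 1" and cont: "continuous_on UNIV f"
    and per: "\<And>z. cos (f (z + T)) = cos (f z)"
    and dq: "\<And>z. (q has_vector_derivative q' z) (at z)"
    and dq': "\<And>z. (q' has_vector_derivative
               of_real ((gam c)^2) * lam^2 * q z - of_real (gam c * cos (f z)) * q z) (at z)"
  defines "r1 \<equiv> floquet_plus c f T lam / exp (of_real (c * gam c) * lam * of_real T)"
    and "r2 \<equiv> floquet_minus c f T lam / exp (of_real (c * gam c) * lam * of_real T)"
  shows "q (z + T + T) - (r1 + r2) * q (z + T) + r1 * r2 * q z = 0"
proof -
  let ?E = "\<lambda>z. exp (of_real (c * gam c) * lam * of_real z)"
  define \<epsilon> where "\<epsilon> = ?E T"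
  have "\<epsilon> \<noteq> 0" by (simp add: \<epsilon>_def)
  have shift1: "?E (z + T) = ?E z * \<epsilon>" for z
    by (simp add: \<epsilon>_def distrib_left exp_add)
  have shift2: "?E (z + T + T) = ?E z * \<epsilon>^2" for z
    unfolding shift1 by (simp add: power2_eq_square)
  obtain a b d e where M: "monodromy c f T lam = (a, b, d, e)"
    by (metis prod_cases4)
  note sum_prod = floquet_plus_minus[OF M]
  have "?E z * \<epsilon>^2 * (q (z + T + T) - (r1 + r2) * q (z + T) + r1 * r2 * q z)
      = ?E (z + T + T) * q (z + T + T) - (a + e) * (?E (z + T) * q (z + T))
        + (a * e - b * d) * (?E z * q z)"
    using \<open>\<epsilon> \<noteq> 0\<close> unfolding shift1 shift2 r1_def r2_def \<epsilon>_def[symmetric] sum_prod[symmetric]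
    by (simp add: field_simps power2_eq_square)
  also have "\<dots> = 0"
    using P_sol_monodromy_recurrence[OF cont P_sol_exp_mult[OF \<open>c^2 \<noteq> 1\<close> dq dq'] per M]
    by simp
  finally show ?thesis by (simp add: \<open>\<epsilon> \<noteq> 0\<close>)
qed

lemma norm_floquet_if_in_sigmaQ:
  assumes "c^2 \<noteq> 1" and cont: "continuous_on UNIV f"
    and per: "\<And>z. cos (f (z + T)) = cos (f z)" and "lam \<in> sigmaQ c f"
  defines "\<mu> \<equiv> of_real (c * gam c) * lam"
  shows "cmod (floquet_plus c f T lam) = exp (Re \<mu> * T)"
    and "cmod (floquet_minus c f T lam) = exp (Re \<mu> * T)"
proof -
  obtain q q' z0 where dq: "\<And>z. (q has_vector_derivative q' z) (at z)"
    and dq': "\<And>z. (q' has_vector_derivative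
               of_real ((gam c)^2) * lam^2 * q z - of_real (gam c * cos (f z)) * q z) (at z)"
    and "bounded (range q)" and "q z0 \<noteq> 0"
    using \<open>lam \<in> sigmaQ c f\<close> unfolding sigmaQ_def by blast
  define \<epsilon> where "\<epsilon> = exp (\<mu> * of_real T)"
  define r1 r2 where "r1 = floquet_plus c f T lam / \<epsilon>" and "r2 = floquet_minus c f T lam / \<epsilon>"
  have "\<epsilon> \<noteq> 0" by (simp add: \<epsilon>_def)
  have "r1 * r2 = 1"
    using floquet_plus_mult_minus[OF cont, of c T lam] \<open>\<epsilon> \<noteq> 0\<close>
    by (simp add: r1_def r2_def \<epsilon>_def \<mu>_def mult_ac flip: exp_double power2_eq_square)
  have "q (z + T + T) - (r1 + r2) * q (z + T) + r1 * r2 * q z = 0" for z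
    unfolding r1_def r2_def \<epsilon>_def \<mu>_def
    by (rule Q_sol_floquet_recurrence[OF \<open>c^2 \<noteq> 1\<close> cont per dq dq'])
  from norm_eq_1_if_bounded_recurrence[OF this \<open>r1 * r2 = 1\<close> \<open>bounded (range q)\<close> \<open>q z0 \<noteq> 0\<close>]
  have "cmod r1 = 1" .
  moreover from this have "cmod r2 = 1"
    using \<open>r1 * r2 = 1\<close> by (metis norm_mult norm_one mult_1)
  moreover have "cmod \<epsilon> = exp (Re \<mu> * T)"
    by (simp add: \<epsilon>_def norm_exp_eq_Re)
  ultimately show "cmod (floquet_plus c f T lam) = exp (Re \<mu> * T)"
    and "cmod (floquet_minus c f T lam) = exp (Re \<mu> * T)"
    using \<open>\<epsilon> \<noteq> 0\<close> by (simp_all add: r1_def r2_def norm_divide)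
qed

lemma G_p_if_in_sigmaQ:
  assumes "c^2 \<noteq> 1" and "continuous_on UNIV f"
    and "\<And>z. cos (f (z + T)) = cos (f z)" and "lam \<in> sigmaQ c f"
  shows "G_p c f T lam = (Re (of_real (c * gam c) * lam) * T)^2"
  using norm_floquet_if_in_sigmaQ[OF assms] by (simp add: G_p_def power2_eq_square)

theorem lemma3p13:
  fixes c E T :: real and f f' :: "real \<Rightarrow> real"
  assumes "traveling_wave c f f'"
    and "energy c f f' E"
    and "0 < E" and "E < 2"
    and "fundamental_period f T"
  shows "(\<exists>\<alpha>::real. \<alpha> > 0 \<and> complex_of_real \<alpha> \<in> sigmaQ c f) \<and>
         (c \<noteq> 0 \<longrightarrow> (\<forall>\<alpha>::real. \<alpha> > 0 \<and> complex_of_real \<alpha> \<in> sigmaQ c f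
                          \<longrightarrow> G_p c f T (complex_of_real \<alpha>) > 0))"
proof -
  obtain f'' where "c^2 \<noteq> 1"
    and df: "\<And>z. (f has_real_derivative f' z) (at z)"
    and df': "\<And>z. (f' has_real_derivative f'' z) (at z)"
    and ode: "\<And>z. (c^2 - 1) * f'' z + sin (f z) = 0"
    using assms(1) unfolding traveling_wave_def by blast
  have cont: "continuous_on UNIV f"
    using df by (intro continuous_at_imp_continuous_on) (blast intro: DERIV_isCont)
  obtain k :: int where "T > 0" and "\<And>z. f (z + T) = f z + 2 * pi * of_int k"
    using assms(5) unfolding fundamental_period_def period_mod_2pi_def by blast
  then have per: "\<And>z. cos (f (z + T)) = cos (f z)"
    by (simp add: cos_add)
  have "G_p c f T (complex_of_real \<alpha>) > 0"
    if "c \<noteq> 0" and "\<alpha> > 0" and "complex_of_real \<alpha> \<in> sigmaQ c f" for \<alpha>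
  proof -
    have "gam c \<noteq> 0" using \<open>c^2 \<noteq> 1\<close> by (simp add: gam_def)
    then have "c * gam c * \<alpha> * T \<noteq> 0" using that \<open>T > 0\<close> by simp
    then show ?thesis
      using G_p_if_in_sigmaQ[OF \<open>c^2 \<noteq> 1\<close> cont per that(3)] by simp
  qed
  moreover have "\<exists>\<alpha>>0. complex_of_real \<alpha> \<in> sigmaQ c f"
    using assms(2-4) unfolding energy_def
    by (intro librational_wave_in_sigmaQ[OF \<open>c^2 \<noteq> 1\<close> df df' ode]) auto
  ultimately show ?thesis by blast
qed

end
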